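(* Let $L\ge 2$, $\lambda>0$, $d_{\min}>0$, let ${\bf q}_r\in\mathbb{R}^3$ and ${\cal C}\subseteq\mathbb{R}^3$, and let ${\bm\kappa}_k,{\bm\kappa}_{k'}\in\mathbb{R}^3$ be unit vectors with ${\bm\kappa}_k\neq{\bm\kappa}_{k'}$. Consider the problem $$\min_{{\bf q}_1,\dots,{\bf q}_L\in\mathbb{R}^3}\ \xi({\bf q}_1,\dots,{\bf q}_L):=\frac{1}{L^2}\Big|\sum_{l=1}^L e^{\,\mathrm{j}\frac{2\pi}{\lambda}({\bm\kappa}_k-{\bm\kappa}_{k'})^T{\bf q}_l}\Big|^2$$ subject to ${\bf q}_r+{\bf q}_l\in{\cal C}$ for all $l$ and $\|{\bf q}_l-{\bf q}_{l'}\|\ge d_{\min}$ for all $l\neq l'$. Let $\nu_{\min}=\big\lceil L d_{\min}\|{\bm\kappa}_k-{\bm\kappa}_{k'}\|/\lambda-1\big\rceil$ and $$\varsigma^\star=\begin{cases}\nu_{\min}/L, & \text{if } \mathrm{mod}(\nu_{\min}+1,L)\neq 0,\\ (\nu_{\min}+1)/L, & \text{otherwise.}\end{cases}$$ For an arbitrary ${\bf q}_1\in\mathbb{R}^3$ define $${\bf q}_l={\bf q}_1+(l-1)\frac{(\varsigma^\star+1/L)\lambda}{\|{\bm\kappa}_k-{\bm\kappa}_{k'}\|^2}({\bm\kappa}_k-{\bm\kappa}_{k'}),\quad l=1,\dots,L.$$ Then $\xi({\bf q}_1,\dots,{\bf q}_L)=0$ and $\|{\bf q}_l-{\bf q}_{l'}\|\ge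 d_{\min}$ for all $l\neq l'$. Consequently, whenever ${\bf q}_1$ is such that ${\bf q}_r+{\bf q}_l\in{\cal C}$ for all $l$, these positions form an optimal solution of the problem, achieving objective value zero.
   Context: $\mathrm{j}$ denotes the imaginary unit; $\lceil\cdot\rceil$ is the ceiling function; $\mathrm{mod}(a,b)$ is the remainder of integer $a$ divided by $b$. The quantity $\xi$ is the squared correlation coefficient between the far-field (uniform plane wave) channels of two users with propagation directions ${\bm\kappa}_k,{\bm\kappa}_{k'}$ received by $L$ single-antenna UAVs at positions ${\bf q}_l$ (relative to a reference point ${\bf q}_r$), ${\cal C}$ is the UAV movable region and $d_{\min}$ the minimum safe inter-UAV distance. *)

theory Defs
  imports "HOL-Analysis.Analysis"
begin

text \<open>UAV positions are functions q :: nat \<Rightarrow> real^3, only the values at indices 1..L matter.\<close>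

definition xi :: "real \<Rightarrow> real^3 \<Rightarrow> real^3 \<Rightarrow> nat \<Rightarrow> (nat \<Rightarrow> real^3) \<Rightarrow> real" where
  "xi lam ka kb L q =
     (1 / (real L)^2) *
     (cmod (\<Sum>l=1..L. exp (\<i> * complex_of_real (2 * pi / lam * ((ka - kb) \<bullet> q l)))))^2"

definition feasible :: "(real^3) set \<Rightarrow> real^3 \<Rightarrow> real \<Rightarrow> nat \<Rightarrow> (nat \<Rightarrow> real^3) \<Rightarrow> bool" where
  "feasible C qr dmin L q \<longleftrightarrow>
     (\<forall>l\<in>{1..L}. qr + q l \<in> C) \<and>
     (\<forall>l\<in>{1..L}. \<forall>l'\<in>{1..L}. l \<noteq> l' \<longrightarrow> norm (q l - q l') \<ge> dmin)"

definition optimal :: "(real^3) set \<Rightarrow> real^3 \<Rightarrow> real \<Rightarrow> real \<Rightarrow> real^3 \<Rightarrow> real^3 \<Rightarrow> nat \<Rightarrow> (nat \<Rightarrow> real^3) \<Rightarrow> bool" where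
  "optimal C qr dmin lam ka kb L q \<longleftrightarrow>
     feasible C qr dmin L q \<and>
     (\<forall>p. feasible C qr dmin L p \<longrightarrow> xi lam ka kb L q \<le> xi lam ka kb L p)"

definition nu_min :: "nat \<Rightarrow> real \<Rightarrow> real \<Rightarrow> real^3 \<Rightarrow> real^3 \<Rightarrow> int" where
  "nu_min L dmin lam ka kb = \<lceil>real L * dmin * norm (ka - kb) / lam - 1\<rceil>"

definition varsigma_star :: "nat \<Rightarrow> real \<Rightarrow> real \<Rightarrow> real^3 \<Rightarrow> real^3 \<Rightarrow> real" where
  "varsigma_star L dmin lam ka kb =
     (let \<nu> = nu_min L dmin lam ka kb in
      if (\<nu> + 1) mod int L \<noteq> 0 then real_of_int \<nu> / real L
      else real_of_int (\<nu> + 1) / real L)"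

definition positions :: "nat \<Rightarrow> real \<Rightarrow> real \<Rightarrow> real^3 \<Rightarrow> real^3 \<Rightarrow> real^3 \<Rightarrow> nat \<Rightarrow> real^3" where
  "positions L dmin lam ka kb q1 l =
     q1 + ((real l - 1) * ((varsigma_star L dmin lam ka kb + 1 / real L) * lam
             / (norm (ka - kb))^2)) *\<^sub>R (ka - kb)"

end

theory Submission
  imports Defs
begin

(* The positions form a uniform linear array along ka - kb whose phase advances by
   2 pi m / L per element, where m = L * varsigma_star + 1 is an integer chosen (this is
   the case split in varsigma_star) not to be a multiple of L. The sum in xi is then a
   geometric sum over a nontrivial L-th root of unity, hence zero, and zero is the least
   possible value of xi. The spacing m lam / (L norm (ka - kb)) is at least dmin because
   m >= nu_min + 1 >= L dmin norm (ka - kb) / lam. *)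

lemma sum_powers_root_of_unity_eq_0:
  fixes L :: nat and m :: int
  assumes "L > 0" and "\<not> int L dvd m"
  shows "(\<Sum>k<L. exp (2 * pi * \<i> * of_int m / of_nat L) ^ k) = 0"
proof -
  define w where "w = exp (2 * pi * \<i> * of_int m / of_nat L)"
  have "w ^ L = exp (\<i> * (of_int m * (of_real pi * 2)))"
    unfolding w_def exp_of_nat_mult[symmetric] using assms(1) by (simp add: field_simps)
  then have "w ^ L = 1" by simp
  moreover have "w \<noteq> 1"
  proof
    assume "w = 1"
    then obtain n :: int where "2 * pi * m / L = of_int (2 * n) * pi"
      unfolding w_def exp_eq_1 by auto
    then have "real_of_int m = real_of_int (n * int L)" using assms(1) by (simp add: field_simps)
    then have "m = n * int L" by (simp only: of_int_eq_iff)
    then show False using assms(2) by simp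
  qed
  ultimately show ?thesis unfolding w_def by (simp add: sum_gp_strict)
qed

lemma sum_exp_uniform_phase_step_eq_0:
  fixes L :: nat and m :: int
  assumes "L > 0" and "\<not> int L dvd m"
  shows "(\<Sum>l=1..L. exp (\<i> * of_real (\<theta> + (real l - 1) * (2 * pi * m / L)))) = 0"
proof -
  define w where "w = exp (2 * pi * \<i> * of_int m / of_nat L)"
  have "exp (\<i> * of_real (\<theta> + (real l - 1) * (2 * pi * m / L))) = exp (\<i> * \<theta>) * w ^ (l - 1)"
    if "l \<ge> 1" for l
  proof -
    have "\<i> * of_real (\<theta> + (real l - 1) * (2 * pi * m / L))
        = \<i> * \<theta> + of_nat (l - 1) * (2 * pi * \<i> * of_int m / of_nat L)"
      using that by (simp add: of_nat_diff algebra_simps)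
    then show ?thesis unfolding w_def by (simp only: exp_add exp_of_nat_mult)
  qed
  then have "(\<Sum>l=1..L. exp (\<i> * of_real (\<theta> + (real l - 1) * (2 * pi * m / L))))
      = (\<Sum>l=1..L. exp (\<i> * \<theta>) * w ^ (l - 1))"
    by (intro sum.cong) auto
  also have "\<dots> = exp (\<i> * \<theta>) * (\<Sum>k<L. w ^ k)"
    by (simp add: sum.atLeast1_atMost_eq sum_distrib_left)
  also have "\<dots> = 0"
    unfolding w_def using sum_powers_root_of_unity_eq_0[OF assms] by simp
  finally show ?thesis .
qed

lemma xi_uniform_array_eq_0:
  fixes lam :: real and v q1 :: "real^3" and m :: int
  assumes "L > 0" and "lam \<noteq> 0" and "\<not> int L dvd m" and "(ka - kb) \<bullet> v = lam * m / L"
  shows "xi lam ka kb L (\<lambda>l. q1 + (real l - 1) *\<^sub>R v) = 0"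
proof -
  have phase: "2 * pi / lam * ((ka - kb) \<bullet> (q1 + (real l - 1) *\<^sub>R v))
      = 2 * pi / lam * ((ka - kb) \<bullet> q1) + (real l - 1) * (2 * pi * m / L)" for l
  proof -
    have "(ka - kb) \<bullet> (q1 + (real l - 1) *\<^sub>R v) = (ka - kb) \<bullet> q1 + (real l - 1) * (lam * m / L)"
      by (simp add: inner_add_right assms(4))
    then show ?thesis using assms(2) by (simp add: field_simps)
  qed
  have "(\<Sum>l=1..L. exp (\<i> * of_real (2 * pi / lam * ((ka - kb) \<bullet> (q1 + (real l - 1) *\<^sub>R v))))) = 0"
    unfolding phase by (rule sum_exp_uniform_phase_step_eq_0[OF assms(1,3)])
  then show ?thesis by (simp add: xi_def)
qed

lemma uniform_array_separation:
  fixes v q1 :: "'a::real_normed_vector" and l l' :: nat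
  assumes "l \<noteq> l'"
  shows "norm v \<le> norm ((q1 + (real l - 1) *\<^sub>R v) - (q1 + (real l' - 1) *\<^sub>R v))"
proof -
  have "(q1 + (real l - 1) *\<^sub>R v) - (q1 + (real l' - 1) *\<^sub>R v) = (real l - real l') *\<^sub>R v"
    by (simp add: algebra_simps)
  moreover have "1 \<le> \<bar>real l - real l'\<bar>" using assms by linarith
  ultimately show ?thesis using mult_right_mono[of 1 _ "norm v"] by simp
qed

lemma varsigma_star_step_numerator:
  assumes "L \<ge> 2"
  obtains m :: int where "varsigma_star L dmin lam ka kb + 1 / real L = of_int m / real L"
    and "\<not> int L dvd m" and "real L * dmin * norm (ka - kb) / lam \<le> of_int m"
proof -
  define \<nu> where "\<nu> = nu_min L dmin lam ka kb"
  have \<nu>_ge: "real L * dmin * norm (ka - kb) / lam \<le> of_int \<nu> + 1"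
    unfolding \<nu>_def nu_min_def by linarith
  have L_pos: "real L > 0" using assms by simp
  show ?thesis
  proof (cases "int L dvd \<nu> + 1")
    case False
    then have "varsigma_star L dmin lam ka kb + 1 / real L = of_int (\<nu> + 1) / real L"
      unfolding varsigma_star_def \<nu>_def[symmetric] Let_def using L_pos
      by (simp add: dvd_eq_mod_eq_0 add_divide_distrib)
    with False \<nu>_ge show ?thesis by (intro that) auto
  next
    case True
    then have "varsigma_star L dmin lam ka kb + 1 / real L = of_int (\<nu> + 2) / real L"
      unfolding varsigma_star_def \<nu>_def[symmetric] Let_def using L_pos
      by (simp add: dvd_eq_mod_eq_0 add_divide_distrib)
    moreover have "\<not> int L dvd \<nu> + 2"
    proof
      assume "int L dvd \<nu> + 2"
      with True have "int L dvd 1" by (metis add_diff_cancel_left' add.commute dvd_diff one_add_one add.assoc)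
      with assms show False by simp
    qed
    ultimately show ?thesis using \<nu>_ge by (intro that) auto
  qed
qed

theorem theorem1:
  fixes L :: nat and lam dmin :: real and qr q1 ka kb :: "real^3" and C :: "(real^3) set"
  assumes "L \<ge> 2" and "lam > 0" and "dmin > 0"
    and "norm ka = 1" and "norm kb = 1" and "ka \<noteq> kb"
  shows "xi lam ka kb L (positions L dmin lam ka kb q1) = 0
    \<and> (\<forall>l\<in>{1..L}. \<forall>l'\<in>{1..L}. l \<noteq> l' \<longrightarrow>
         norm (positions L dmin lam ka kb q1 l - positions L dmin lam ka kb q1 l') \<ge> dmin)
    \<and> ((\<forall>l\<in>{1..L}. qr + positions L dmin lam ka kb q1 l \<in> C) \<longrightarrow>
         optimal C qr dmin lam ka kb L (positions L dmin lam ka kb q1))"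
proof -
  define d where "d = ka - kb"
  have d_pos: "norm d > 0" using assms(6) by (simp add: d_def)
  obtain m where step: "varsigma_star L dmin lam ka kb + 1 / real L = of_int m / real L"
    and not_dvd: "\<not> int L dvd m" and m_ge: "real L * dmin * norm d / lam \<le> of_int m"
    using varsigma_star_step_numerator[OF assms(1)] unfolding d_def by blast
  define v where "v = (of_int m / real L * lam / (norm d)\<^sup>2) *\<^sub>R d"
  have positions_eq: "positions L dmin lam ka kb q1 = (\<lambda>l. q1 + (real l - 1) *\<^sub>R v)"
    by (simp add: fun_eq_iff positions_def step v_def d_def)
  have "d \<bullet> v = lam * m / L"
    using d_pos by (simp add: v_def power2_norm_eq_inner)
  then have xi_0: "xi lam ka kb L (positions L dmin lam ka kb q1) = 0"
    unfolding positions_eq d_def using assms(1,2) not_dvd by (intro xi_uniform_array_eq_0) auto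
  have "dmin \<le> of_int m * lam / (real L * norm d)"
    using m_ge assms(1,2) d_pos by (simp add: field_simps)
  also have "\<dots> = norm v"
  proof -
    have "0 < real L * dmin * norm d / lam" using assms(1,2,3) d_pos by simp
    with m_ge have "0 \<le> of_int m * lam" using assms(2) by simp
    then show ?thesis using d_pos by (simp add: v_def power2_eq_square)
  qed
  finally have "dmin \<le> norm v" .
  then have separated: "\<forall>l\<in>{1..L}. \<forall>l'\<in>{1..L}. l \<noteq> l' \<longrightarrow>
      norm (positions L dmin lam ka kb q1 l - positions L dmin lam ka kb q1 l') \<ge> dmin"
    unfolding positions_eq using uniform_array_separation order_trans by blast
  have "0 \<le> xi lam ka kb L p" for p by (simp add: xi_def)
  with xi_0 separated show ?thesis by (simp add: optimal_def feasible_def)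
qed

end
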